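(* Let $\mu>0$ and $\rho>0$ and $s\in\mathbb{R}^m$ be fixed. Then (1) $F(\cdot,s;\mu,\rho)$ is twice differentiable with respect to $x$, and $$\nabla_xF(x,s;\mu,\rho)=\nabla f(x)-\rho\nabla c(x)y,\qquad \nabla_x^2F(x,s;\mu,\rho)=\Big(\nabla^2 f(x)-\rho\sum_{i=1}^m y_i\nabla^2 c_i(x)\Big)+\rho\sum_{i=1}^m\frac{y_i}{z_i+y_i}\nabla c_i(x)\nabla c_i(x)^T,$$ where $y=y(x,s;\mu,\rho)$, $z=z(x,s;\mu,\rho)$; (2) if $f$ and $-c_i$ ($i=1,\dots,m$) are convex on $\mathbb{R}^n$, then $F(\cdot,s;\mu,\rho)$ is convex on $\mathbb{R}^n$.
   Context: Let $f:\mathbb{R}^n\to\mathbb{R}$ and $c=(c_1,\dots,c_m):\mathbb{R}^n\to\mathbb{R}^m$ be twice continuously differentiable; $\nabla c(x)\in\mathbb{R}^{n\times m}$ denotes the matrix whose $i$-th column is $\nabla c_i(x)$. For parameters $\mu>0$, $\rho>0$ and variables $x\in\mathbb{R}^n$, $s\in\mathbb{R}^m$, define for $i=1,\dots,m$: $z_i(x,s;\mu,\rho)=\frac{1}{2\rho}\big(\sqrt{(s_i-\rho c_i(x))^2+4\rho\mu}-(s_i-\rho c_i(x))\big)$, $y_i(x,s;\mu,\rho)=\frac{1}{2\rho}\big(\sqrt{(s_i-\rho c_i(x))^2+4\rho\mu}+(s_i-\rho c_i(x))\big)$, $h_i(x,s;\mu,\rho)=-\mu\ln z_i(x,s;\mu,\rho)+\frac{\rho}{2}y_i(x,s;\mu,\rho)^2-\frac{1}{2\rho}s_i^2$,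 and the augmented Lagrangian $F(x,s;\mu,\rho)=f(x)+\sum_{i=1}^m h_i(x,s;\mu,\rho)$. We abbreviate $z_i,y_i$ when arguments are clear, and write $z=(z_i)$, $y=(y_i)$, $Z=\mathrm{diag}(z)$, $Y=\mathrm{diag}(y)$. *)

theory Defs
  imports "HOL-Analysis.Analysis"
begin

definition zc :: "real \<Rightarrow> real \<Rightarrow> real \<Rightarrow> real \<Rightarrow> real" where
  "zc \<mu> \<rho> si ci = (sqrt ((si - \<rho> * ci)^2 + 4 * \<rho> * \<mu>) - (si - \<rho> * ci)) / (2 * \<rho>)"

definition yc :: "real \<Rightarrow> real \<Rightarrow> real \<Rightarrow> real \<Rightarrow> real" where
  "yc \<mu> \<rho> si ci = (sqrt ((si - \<rho> * ci)^2 + 4 * \<rho> * \<mu>) + (si - \<rho> * ci)) / (2 * \<rho>)"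

definition hc :: "real \<Rightarrow> real \<Rightarrow> real \<Rightarrow> real \<Rightarrow> real" where
  "hc \<mu> \<rho> si ci = - \<mu> * ln (zc \<mu> \<rho> si ci) + \<rho> / 2 * (yc \<mu> \<rho> si ci)^2 - si^2 / (2 * \<rho>)"

definition zv :: "(real^'n \<Rightarrow> real^'m) \<Rightarrow> real \<Rightarrow> real \<Rightarrow> real^'n \<Rightarrow> real^'m \<Rightarrow> 'm \<Rightarrow> real" where
  "zv c \<mu> \<rho> x s i = zc \<mu> \<rho> (s $ i) (c x $ i)"

definition yv :: "(real^'n \<Rightarrow> real^'m) \<Rightarrow> real \<Rightarrow> real \<Rightarrow> real^'n \<Rightarrow> real^'m \<Rightarrow> 'm \<Rightarrow> real" where
  "yv c \<mu> \<rho> x s i = yc \<mu> \<rho> (s $ i) (c x $ i)"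

definition AugLag :: "(real^'n \<Rightarrow> real) \<Rightarrow> (real^'n \<Rightarrow> real^'m) \<Rightarrow> real \<Rightarrow> real \<Rightarrow> real^'n \<Rightarrow> real^'m \<Rightarrow> real" where
  "AugLag f c \<mu> \<rho> x s = f x + (\<Sum>i\<in>UNIV. hc \<mu> \<rho> (s $ i) (c x $ i))"

definition outer :: "real^'n \<Rightarrow> real^'n \<Rightarrow> real^'n^'n" where
  "outer u v = (\<chi> j k. u $ j * v $ k)"

end

theory Submission
  imports Defs
begin

(*
  Everything reduces to the scalar penalty t |-> hc mu rho si t. Its derivative is -rho y,
  and since z y = mu/rho and z + y = sqrt ((si - rho t)^2 + 4 rho mu)/rho, the multiplier
  y has derivative -y/(z + y) < 0. The chain rule then gives the gradient and the
  Hessian of F. Moreover the penalty has increasing derivative and is nonincreasing,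
  so composing it with a concave constraint c_i yields a convex function.
*)

lemma sqrt_square_plus_pos_gt_abs:
  fixes w a :: real
  assumes "a > 0"
  shows "\<bar>w\<bar> < sqrt (w\<^sup>2 + a)"
  using real_sqrt_less_mono[of "w\<^sup>2" "w\<^sup>2 + a"] assms by simp

lemma zc_pos: "\<mu> > 0 \<Longrightarrow> \<rho> > 0 \<Longrightarrow> zc \<mu> \<rho> si t > 0"
  using sqrt_square_plus_pos_gt_abs[of "4 * \<rho> * \<mu>" "si - \<rho> * t"]
  unfolding zc_def by (simp add: abs_less_iff)

lemma yc_pos: "\<mu> > 0 \<Longrightarrow> \<rho> > 0 \<Longrightarrow> yc \<mu> \<rho> si t > 0"
  using sqrt_square_plus_pos_gt_abs[of "4 * \<rho> * \<mu>" "si - \<rho> * t"]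
  unfolding yc_def by (simp add: abs_less_iff)

lemma zc_mult_yc:
  assumes "\<mu> > 0" "\<rho> > 0"
  shows "zc \<mu> \<rho> si t * yc \<mu> \<rho> si t = \<mu> / \<rho>"
proof -
  define w where "w = si - \<rho> * t"
  define r where "r = sqrt (w\<^sup>2 + 4 * \<rho> * \<mu>)"
  have "r\<^sup>2 = w\<^sup>2 + 4 * \<rho> * \<mu>"
    unfolding r_def using assms by simp
  moreover have "zc \<mu> \<rho> si t * yc \<mu> \<rho> si t = (r\<^sup>2 - w\<^sup>2) / (4 * \<rho>\<^sup>2)"
    unfolding zc_def yc_def r_def w_def by (simp add: field_simps power2_eq_square)
  ultimately show ?thesis
    using assms by (simp add: field_simps power2_eq_square)
qed

lemma zc_plus_yc:
  assumes "\<rho> > 0"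
  shows "zc \<mu> \<rho> si t + yc \<mu> \<rho> si t = sqrt ((si - \<rho> * t)\<^sup>2 + 4 * \<rho> * \<mu>) / \<rho>"
  unfolding zc_def yc_def using assms by (simp add: field_simps)

lemma has_real_derivative_zc_yc:
  assumes mu: "\<mu> > 0" and rho: "\<rho> > 0"
  shows "(zc \<mu> \<rho> si has_real_derivative zc \<mu> \<rho> si t / (zc \<mu> \<rho> si t + yc \<mu> \<rho> si t)) (at t)"
    and "(yc \<mu> \<rho> si has_real_derivative - yc \<mu> \<rho> si t / (zc \<mu> \<rho> si t + yc \<mu> \<rho> si t)) (at t)"
proof -
  define w where "w = (\<lambda>t. si - \<rho> * t)"
  define r where "r = (\<lambda>t. sqrt ((w t)\<^sup>2 + 4 * \<rho> * \<mu>))"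
  have arg_pos: "(w t)\<^sup>2 + 4 * \<rho> * \<mu> > 0"
    using mu rho by (simp add: add_nonneg_pos)
  then have r_pos: "r t > 0"
    unfolding r_def by simp
  have w': "(w has_real_derivative - \<rho>) (at t)"
    unfolding w_def by (auto intro!: derivative_eq_intros)
  have r': "(r has_real_derivative - \<rho> * w t / r t) (at t)"
    using arg_pos r_pos unfolding r_def
    by (auto intro!: derivative_eq_intros w' simp: field_simps)
  have sum_eq: "zc \<mu> \<rho> si t + yc \<mu> \<rho> si t = r t / \<rho>"
    using zc_plus_yc[OF rho] unfolding r_def w_def .
  have "zc \<mu> \<rho> si = (\<lambda>t. (r t - w t) / (2 * \<rho>))"
    by (simp add: fun_eq_iff zc_def r_def w_def)
  then show "(zc \<mu> \<rho> si has_real_derivative zc \<mu> \<rho> si t / (zc \<mu> \<rho> si t + yc \<mu> \<rho> si t)) (at t)"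
    unfolding sum_eq using rho r_pos
    by (auto intro!: derivative_eq_intros r' w' simp: zc_def r_def[symmetric] w_def[symmetric] field_simps)
  have "yc \<mu> \<rho> si = (\<lambda>t. (r t + w t) / (2 * \<rho>))"
    by (simp add: fun_eq_iff yc_def r_def w_def)
  then show "(yc \<mu> \<rho> si has_real_derivative - yc \<mu> \<rho> si t / (zc \<mu> \<rho> si t + yc \<mu> \<rho> si t)) (at t)"
    unfolding sum_eq using rho r_pos
    by (auto intro!: derivative_eq_intros r' w' simp: yc_def r_def[symmetric] w_def[symmetric] field_simps)
qed

lemma has_real_derivative_hc:
  assumes mu: "\<mu> > 0" and rho: "\<rho> > 0"
  shows "(hc \<mu> \<rho> si has_real_derivative - \<rho> * yc \<mu> \<rho> si t) (at t)"
proof -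
  define z where "z = zc \<mu> \<rho> si t"
  define y where "y = yc \<mu> \<rho> si t"
  have z: "z > 0" and y: "y > 0"
    unfolding z_def y_def using zc_pos yc_pos mu rho by auto
  have "hc \<mu> \<rho> si = (\<lambda>t. - \<mu> * ln (zc \<mu> \<rho> si t) + \<rho> / 2 * (yc \<mu> \<rho> si t)\<^sup>2 - si\<^sup>2 / (2 * \<rho>))"
    by (simp add: fun_eq_iff hc_def)
  moreover have "(\<dots> has_real_derivative - (\<mu> + \<rho> * y\<^sup>2) / (z + y)) (at t)"
    unfolding z_def y_def
    apply (rule derivative_eq_intros has_real_derivative_zc_yc[OF mu rho] zc_pos[OF mu rho] refl)+
    using z y unfolding z_def y_def by (simp add: divide_simps) (simp add: algebra_simps power2_eq_square)
  moreover have "\<mu> = \<rho> * z * y"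
    using zc_mult_yc[OF mu rho, of si t] rho unfolding z_def y_def by (simp add: field_simps)
  then have "- (\<mu> + \<rho> * y\<^sup>2) / (z + y) = - \<rho> * y"
    using z y by (simp add: field_simps power2_eq_square)
  ultimately show ?thesis
    unfolding y_def by simp
qed

lemma antimono_yc:
  assumes "\<mu> > 0" "\<rho> > 0"
  shows "antimono (yc \<mu> \<rho> si)"
proof (rule antimonoI, rule deriv_nonpos_imp_antimono[OF has_real_derivative_zc_yc(2)[OF assms]])
  show "- yc \<mu> \<rho> si t / (zc \<mu> \<rho> si t + yc \<mu> \<rho> si t) \<le> 0" for t
    using zc_pos[OF assms] yc_pos[OF assms] by (simp add: add_pos_pos less_imp_le)
qed

lemma antimono_hc:
  assumes "\<mu> > 0" "\<rho> > 0"
  shows "antimono (hc \<mu> \<rho> si)"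
proof (rule antimonoI, rule deriv_nonpos_imp_antimono[OF has_real_derivative_hc[OF assms]])
  show "- \<rho> * yc \<mu> \<rho> si t \<le> 0" for t
    using yc_pos[OF assms, of si t] assms by simp
qed

lemma convex_on_hc:
  assumes "\<mu> > 0" "\<rho> > 0"
  shows "convex_on UNIV (hc \<mu> \<rho> si)"
proof (rule convex_on_realI[where f' = "\<lambda>t. - \<rho> * yc \<mu> \<rho> si t"])
  show "(hc \<mu> \<rho> si has_real_derivative - \<rho> * yc \<mu> \<rho> si t) (at t)" for t
    using has_real_derivative_hc[OF assms] .
  show "- \<rho> * yc \<mu> \<rho> si t \<le> - \<rho> * yc \<mu> \<rho> si t'" if "t \<le> t'" for t t'
    using antimonoD[OF antimono_yc[OF assms] that] assms by simp
qed simp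

lemma convex_on_compose_antimono_concave:
  fixes g :: "'a::real_vector \<Rightarrow> real"
  assumes h: "convex_on UNIV h" "antimono h" and g: "concave_on S g"
  shows "convex_on S (\<lambda>x. h (g x))"
proof (rule convex_onI)
  fix t :: real and x y
  assume t: "0 < t" "t < 1" and xy: "x \<in> S" "y \<in> S"
  have "(1 - t) * g x + t * g y \<le> g ((1 - t) *\<^sub>R x + t *\<^sub>R y)"
    using concave_onD[OF g, of t x y] t xy by simp
  then have "h (g ((1 - t) *\<^sub>R x + t *\<^sub>R y)) \<le> h ((1 - t) * g x + t * g y)"
    using antimonoD[OF h(2)] by blast
  also have "\<dots> \<le> (1 - t) * h (g x) + t * h (g y)"
    using convex_onD[OF h(1), of t "g x" "g y"] t by simp
  finally show "h (g ((1 - t) *\<^sub>R x + t *\<^sub>R y)) \<le> (1 - t) * h (g x) + t * h (g y)" .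
qed (rule concave_on_imp_convex[OF g])

lemma convex_on_sum_fun:
  assumes "finite I" "convex S" "\<And>i. i \<in> I \<Longrightarrow> convex_on S (f i)"
  shows "convex_on S (\<lambda>x. \<Sum>i\<in>I. f i x)"
  using assms by (induction I rule: finite_induct) (auto simp: convex_on_const)

lemma convex_on_AugLag:
  assumes "convex_on S f" "\<And>i. concave_on S (\<lambda>x. c x $ i)" "\<mu> > 0" "\<rho> > 0"
  shows "convex_on S (\<lambda>x. AugLag f c \<mu> \<rho> x s)"
proof -
  have "convex_on S (\<lambda>x. hc \<mu> \<rho> (s $ i) (c x $ i))" for i
    using convex_on_compose_antimono_concave[OF convex_on_hc[OF assms(3,4)] antimono_hc[OF assms(3,4)] assms(2)] .
  then have "convex_on S (\<lambda>x. \<Sum>i\<in>UNIV. hc \<mu> \<rho> (s $ i) (c x $ i))"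
    using convex_on_imp_convex[OF assms(1)] by (simp add: convex_on_sum_fun)
  then show ?thesis
    unfolding AugLag_def using assms(1) by (rule convex_on_add[rotated])
qed

lemma outer_mult_vec: "outer u v *v h = (v \<bullet> h) *\<^sub>R u"
  by (simp add: vec_eq_iff outer_def matrix_vector_mult_def inner_vec_def sum_distrib_left mult_ac)

lemma sum_matrix_vector_mult: "(\<Sum>i\<in>I. A i) *v (h::real^'n) = (\<Sum>i\<in>I. A i *v h)"
  by (induction I rule: infinite_finite_induct) (simp_all add: matrix_vector_mult_add_rdistrib)

context
  fixes c :: "real^'n \<Rightarrow> real^'m" and gc :: "'m \<Rightarrow> real^'n \<Rightarrow> real^'n"
    and \<mu> \<rho> :: real and s :: "real^'m" and x :: "real^'n"
  assumes c: "\<And>i. ((\<lambda>x. c x $ i) has_derivative (\<lambda>h. gc i x \<bullet> h)) (at x)"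
    and mu: "\<mu> > 0" and rho: "\<rho> > 0"
begin

lemma has_derivative_yv:
  "((\<lambda>x. yv c \<mu> \<rho> x s i) has_derivative
     (\<lambda>h. - (yv c \<mu> \<rho> x s i / (zv c \<mu> \<rho> x s i + yv c \<mu> \<rho> x s i)) * (gc i x \<bullet> h))) (at x)"
  using has_derivative_compose[OF c has_field_derivative_imp_has_derivative[OF has_real_derivative_zc_yc(2)[OF mu rho]]]
  by (simp add: yv_def zv_def)

lemma has_derivative_AugLag:
  assumes f: "(f has_derivative (\<lambda>h. gf x \<bullet> h)) (at x)"
  shows "((\<lambda>x. AugLag f c \<mu> \<rho> x s) has_derivative
           (\<lambda>h. (gf x - \<rho> *\<^sub>R (\<Sum>i\<in>UNIV. yv c \<mu> \<rho> x s i *\<^sub>R gc i x)) \<bullet> h)) (at x)"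
proof -
  have "((\<lambda>x. hc \<mu> \<rho> (s $ i) (c x $ i)) has_derivative
           (\<lambda>h. - \<rho> * yv c \<mu> \<rho> x s i * (gc i x \<bullet> h))) (at x)" for i
    using has_derivative_compose[OF c has_field_derivative_imp_has_derivative[OF has_real_derivative_hc[OF mu rho]]]
    by (simp add: yv_def)
  then have "((\<lambda>x. AugLag f c \<mu> \<rho> x s) has_derivative
       (\<lambda>h. gf x \<bullet> h + (\<Sum>i\<in>UNIV. - \<rho> * yv c \<mu> \<rho> x s i * (gc i x \<bullet> h)))) (at x)"
    unfolding AugLag_def by (intro has_derivative_add f has_derivative_sum)
  then show ?thesis
    by (rule has_derivative_eq_rhs)
      (simp add: fun_eq_iff inner_diff_left inner_sum_left sum_distrib_left sum_negf algebra_simps)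
qed

lemma has_derivative_AugLag_gradient:
  assumes gf: "(gf has_derivative (\<lambda>h. Hf x *v h)) (at x)"
    and gc: "\<And>i. (gc i has_derivative (\<lambda>h. Hc i x *v h)) (at x)"
  shows "((\<lambda>x. gf x - \<rho> *\<^sub>R (\<Sum>i\<in>UNIV. yv c \<mu> \<rho> x s i *\<^sub>R gc i x)) has_derivative
           (\<lambda>h. ((Hf x - \<rho> *\<^sub>R (\<Sum>i\<in>UNIV. yv c \<mu> \<rho> x s i *\<^sub>R Hc i x))
                 + \<rho> *\<^sub>R (\<Sum>i\<in>UNIV. (yv c \<mu> \<rho> x s i / (zv c \<mu> \<rho> x s i + yv c \<mu> \<rho> x s i))
                                     *\<^sub>R outer (gc i x) (gc i x))) *v h)) (at x)"
proof -
  have "((\<lambda>x. gf x - \<rho> *\<^sub>R (\<Sum>i\<in>UNIV. yv c \<mu> \<rho> x s i *\<^sub>R gc i x)) has_derivative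
     (\<lambda>h. Hf x *v h - \<rho> *\<^sub>R (\<Sum>i\<in>UNIV. yv c \<mu> \<rho> x s i *\<^sub>R (Hc i x *v h) +
        (- (yv c \<mu> \<rho> x s i / (zv c \<mu> \<rho> x s i + yv c \<mu> \<rho> x s i)) * (gc i x \<bullet> h)) *\<^sub>R gc i x))) (at x)"
    by (intro has_derivative_diff gf has_derivative_scaleR_right has_derivative_sum
        has_derivative_scaleR has_derivative_yv gc)
  then show ?thesis
    by (rule has_derivative_eq_rhs)
      (simp add: fun_eq_iff matrix_vector_mult_add_rdistrib matrix_vector_mult_diff_rdistrib
        scaleR_matrix_vector_assoc[symmetric] sum_matrix_vector_mult outer_mult_vec
        sum.distrib scaleR_sum_right sum_subtractf algebra_simps)
qed

end

theorem lemma2p4: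
  fixes f :: "real^'n \<Rightarrow> real"
    and gf :: "real^'n \<Rightarrow> real^'n"
    and Hf :: "real^'n \<Rightarrow> real^'n^'n"
    and c :: "real^'n \<Rightarrow> real^'m"
    and gc :: "'m \<Rightarrow> real^'n \<Rightarrow> real^'n"
    and Hc :: "'m \<Rightarrow> real^'n \<Rightarrow> real^'n^'n"
    and \<mu> \<rho> :: real and s :: "real^'m"
  assumes f1: "\<And>x. (f has_derivative (\<lambda>h. gf x \<bullet> h)) (at x)"
    and f2: "\<And>x. (gf has_derivative (\<lambda>h. Hf x *v h)) (at x)"
    and f3: "continuous_on UNIV Hf"
    and c1: "\<And>i x. ((\<lambda>x. c x $ i) has_derivative (\<lambda>h. gc i x \<bullet> h)) (at x)"
    and c2: "\<And>i x. (gc i has_derivative (\<lambda>h. Hc i x *v h)) (at x)"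
    and c3: "\<And>i. continuous_on UNIV (Hc i)"
    and mu: "\<mu> > 0" and rho: "\<rho> > 0"
  shows "(\<forall>x.
            ((\<lambda>x. AugLag f c \<mu> \<rho> x s) has_derivative
               (\<lambda>h. (gf x - \<rho> *\<^sub>R (\<Sum>i\<in>UNIV. yv c \<mu> \<rho> x s i *\<^sub>R gc i x)) \<bullet> h)) (at x)
          \<and> ((\<lambda>x. gf x - \<rho> *\<^sub>R (\<Sum>i\<in>UNIV. yv c \<mu> \<rho> x s i *\<^sub>R gc i x)) has_derivative
               (\<lambda>h. ((Hf x - \<rho> *\<^sub>R (\<Sum>i\<in>UNIV. yv c \<mu> \<rho> x s i *\<^sub>R Hc i x))
                     + \<rho> *\<^sub>R (\<Sum>i\<in>UNIV. (yv c \<mu> \<rho> x s i / (zv c \<mu> \<rho> x s i + yv c \<mu> \<rho> x s i))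
                                         *\<^sub>R outer (gc i x) (gc i x))) *v h)) (at x))
       \<and> ((convex_on UNIV f \<and> (\<forall>i. convex_on UNIV (\<lambda>x. - (c x $ i))))
            \<longrightarrow> convex_on UNIV (\<lambda>x. AugLag f c \<mu> \<rho> x s))"
proof (intro conjI allI impI has_derivative_AugLag has_derivative_AugLag_gradient
    convex_on_AugLag c1 f1 f2 c2 mu rho)
qed (simp_all add: concave_on_def)

end
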